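(* Let $k$ be a finite field of odd characteristic, let $A(t)\in k[t]$ be a square-free polynomial of odd degree $d>1$, and let $f(x)\in k[x]$ be a cubic polynomial such that $y^2=f(x)$ is an elliptic curve over $k$. Let $E_A$ be the elliptic curve over $k(t)$ defined by $A(t)y^2=f(x)$. Let $(F,G)$ be a separable integral point on $E_A$. Then $G$ divides $F'$ and $d/3\leq \deg F < d-1$.
   Context: A separable integral point on $E_A$ is a pair $(F,G)$ with $F,G\in k[t]$, $A(t)G(t)^2=f(F(t))$, and $F'\neq 0$, where $F'$ is the derivative of $F$ with respect to $t$. *)

theory Defs
  imports "HOL-Computational_Algebra.Computational_Algebra"
begin

text \<open>The affine curve y^2 = f(x) over k (char k odd) is an elliptic curve iff f is a cubic
  with nonzero discriminant, i.e. f has no repeated root over the algebraic closure,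
  i.e. f is coprime to its formal derivative.\<close>
definition elliptic_cubic :: "'k::field poly \<Rightarrow> bool" where
  "elliptic_cubic f \<longleftrightarrow> degree f = 3 \<and> coprime f (pderiv f)"

definition integral_point_EA :: "'k::field poly \<Rightarrow> 'k poly \<Rightarrow> 'k poly \<Rightarrow> 'k poly \<Rightarrow> bool" where
  "integral_point_EA A f F G \<longleftrightarrow> A * G^2 = pcompose f F"

definition separable_integral_point_EA :: "'k::field poly \<Rightarrow> 'k poly \<Rightarrow> 'k poly \<Rightarrow> 'k poly \<Rightarrow> bool" where
  "separable_integral_point_EA A f F G \<longleftrightarrow> integral_point_EA A f F G \<and> pderiv F \<noteq> 0"

end

theory Submission
  imports Defs
begin

text \<open>Differentiating \<open>A G\<^sup>2 = f(F)\<close> shows that \<open>G\<close> divides \<open>f'(F) F'\<close>. Since \<open>G\<close> also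
  divides \<open>f(F)\<close>, which is coprime to \<open>f'(F)\<close> because \<open>f\<close> is separable, \<open>G\<close> divides \<open>F'\<close>;
  as \<open>F' \<noteq> 0\<close> this forces \<open>deg G < deg F\<close>. Comparing degrees in \<open>A G\<^sup>2 = f(F)\<close> gives
  \<open>deg A + 2 deg G = 3 deg F\<close>, from which both bounds follow.\<close>

text \<open>The library's \<open>degree_pderiv\<close> needs characteristic 0.\<close>

lemma degree_pderiv_less:
  fixes p :: "'a::{comm_semiring_1,semiring_no_zero_divisors} poly"
  assumes "pderiv p \<noteq> 0"
  shows "degree (pderiv p) < degree p"
proof -
  let ?n = "degree (pderiv p)"
  have "coeff (pderiv p) ?n \<noteq> 0" using assms by simp
  then have "coeff p (Suc ?n) \<noteq> 0" by (simp add: coeff_pderiv)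
  then have "Suc ?n \<le> degree p" by (rule le_degree)
  then show ?thesis by simp
qed

text \<open>The library's \<open>bezout_coefficients\<close> needs a \<open>gcd\<close> instance, which \<open>'a poly\<close> lacks for
  an arbitrary field \<open>'a\<close>.\<close>

lemma coprime_imp_bezout:
  fixes a b :: "'a::euclidean_ring"
  assumes "coprime a b"
  shows "\<exists>u v. u * a + v * b = 1"
  using assms
proof (induction "euclidean_size b" arbitrary: a b rule: less_induct)
  case less
  show ?case
  proof (cases "b = 0")
    case True
    with less.prems obtain k where "1 = a * k" by (auto elim: dvdE)
    then have "k * a + 0 * b = 1" by (simp add: mult.commute)
    then show ?thesis by blast
  next
    case False
    then have "coprime b (a mod b)" and "euclidean_size (a mod b) < euclidean_size b"
      using less.prems by (simp_all add: coprime_commute mod_size_less)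
    then obtain u v where "u * b + v * (a mod b) = 1"
      using less.hyps by blast
    then have "v * a + (u - v * (a div b)) * b = 1"
      by (simp add: minus_div_mult_eq_mod [symmetric] algebra_simps)
    then show ?thesis by blast
  qed
qed

lemma dvd_pderiv_if_square_dvd:
  fixes p q :: "'a::idom poly"
  assumes "p\<^sup>2 dvd q"
  shows "p dvd pderiv q"
proof -
  obtain r where "q = p\<^sup>2 * r" using assms by (rule dvdE)
  then have "pderiv q = p * (p * pderiv r + 2 * r * pderiv p)"
    by (simp add: pderiv_mult power2_eq_square algebra_simps)
  then show ?thesis by simp
qed

lemma dvd_pderiv_if_square_dvd_pcompose:
  fixes f F G :: "'a::field poly"
  assumes "G\<^sup>2 dvd pcompose f F" and "coprime f (pderiv f)"
  shows "G dvd pderiv F"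
proof -
  obtain u v where "u * f + v * pderiv f = 1"
    using coprime_imp_bezout[OF assms(2)] by blast
  then have bezout: "pcompose u F * pcompose f F + pcompose v F * pcompose (pderiv f) F = 1"
    by (metis pcompose_1 pcompose_add pcompose_mult)
  have "G dvd pcompose f F"
    using assms(1) by (metis dvd_mult_left power2_eq_square)
  moreover have "G dvd pcompose (pderiv f) F * pderiv F"
    using dvd_pderiv_if_square_dvd[OF assms(1)] by (simp add: pderiv_pcompose)
  ultimately have "G dvd (pcompose u F * pcompose f F + pcompose v F * pcompose (pderiv f) F)
      * pderiv F"
    unfolding distrib_right mult.assoc by simp
  then show ?thesis
    by (simp only: bezout mult_1)
qed

lemma degree_integral_point_EA:
  fixes A f F G :: "'a::field poly"
  assumes "integral_point_EA A f F G" and "A \<noteq> 0" and "G \<noteq> 0"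
  shows "degree A + 2 * degree G = degree f * degree F"
proof -
  have "degree (A * G\<^sup>2) = degree A + 2 * degree G"
    using assms(2,3) by (simp add: degree_mult_eq degree_power_eq)
  moreover have "degree (pcompose f F) = degree f * degree F"
    by (rule degree_pcompose)
  ultimately show ?thesis
    using assms(1) by (simp add: integral_point_EA_def)
qed

theorem lemma3p2:
  fixes A f F G :: "'k::{field,finite} poly"
  assumes "CHAR('k) \<noteq> 2"
    and "squarefree A" and "odd (degree A)" and "degree A > 1"
    and "elliptic_cubic f"
    and "separable_integral_point_EA A f F G"
  shows "G dvd pderiv F \<and> real (degree A) / 3 \<le> real (degree F) \<and> degree F < degree A - 1"
proof -
  have point: "integral_point_EA A f F G" and F'_nonzero: "pderiv F \<noteq> 0"
    using assms(6) by (auto simp: separable_integral_point_EA_def)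
  have cubic: "degree f = 3" and separable: "coprime f (pderiv f)"
    using assms(5) by (auto simp: elliptic_cubic_def)
  have "G\<^sup>2 dvd pcompose f F"
    using point by (metis integral_point_EA_def dvd_triv_right)
  then have G_dvd: "G dvd pderiv F"
    using separable by (rule dvd_pderiv_if_square_dvd_pcompose)
  have "degree G \<le> degree (pderiv F)"
    using G_dvd F'_nonzero by (rule dvd_imp_degree_le)
  also have "\<dots> < degree F"
    using F'_nonzero by (rule degree_pderiv_less)
  finally have "degree G < degree F" .
  moreover have "degree A + 2 * degree G = 3 * degree F"
    using degree_integral_point_EA[OF point] assms(4) G_dvd F'_nonzero cubic by fastforce
  ultimately show ?thesis
    using G_dvd by linarith
qed

end
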